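(* Let $m \in \mathbb N$ and let $\phi \colon \mathcal H_2^0 \to M_m$ be a map. Then the following are equivalent: (i) $\phi$ is real linear and $\phi(\mathcal{IH}_2^0) \subset \mathcal U_m$; (ii) there exist $U, V \in \mathcal U_m$ and $n \in \mathbb N$ such that $m = 2n$ and $\phi(A) = U(A \otimes I_n)V$ for all $A \in \mathcal H_2^0$.
   Context: $M_m$ is the set of $m\times m$ complex matrices, $\mathcal U_m$ the unitary ones, $\mathcal H_2^0$ the real vector space of trace-zero $2\times 2$ complex hermitian matrices, $\mathcal{IH}_2^0 = \mathcal H_2^0 \cap \mathcal U_2$, $I_n$ the identity matrix and $\otimes$ the Kronecker product. *)

theory Defs
  imports Complex_Main "Jordan_Normal_Form.Matrix"
begin

text \<open>Matrices are Jordan_Normal_Form matrices over complex numbers;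
  M_m is carrier_mat m m.\<close>

definition adjoint_mat :: "complex mat \<Rightarrow> complex mat" where
  "adjoint_mat A = mat (dim_col A) (dim_row A) (\<lambda>(i,j). cnj (A $$ (j,i)))"

definition unitary_mats :: "nat \<Rightarrow> complex mat set" where
  "unitary_mats m = {U. U \<in> carrier_mat m m \<and> adjoint_mat U * U = 1\<^sub>m m \<and> U * adjoint_mat U = 1\<^sub>m m}"

definition H20 :: "complex mat set" where
  "H20 = {A. A \<in> carrier_mat 2 2 \<and> adjoint_mat A = A \<and> A $$ (0,0) + A $$ (1,1) = 0}"

definition IH20 :: "complex mat set" where
  "IH20 = H20 \<inter> unitary_mats 2"

definition kron :: "complex mat \<Rightarrow> complex mat \<Rightarrow> complex mat" where
  "kron A B = mat (dim_row A * dim_row B) (dim_col A * dim_col B)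
     (\<lambda>(i,j). A $$ (i div dim_row B, j div dim_col B) * B $$ (i mod dim_row B, j mod dim_col B))"

definition real_linear_on_H20 :: "(complex mat \<Rightarrow> complex mat) \<Rightarrow> bool" where
  "real_linear_on_H20 \<phi> \<longleftrightarrow>
     (\<forall>A\<in>H20. \<forall>B\<in>H20. \<phi> (A + B) = \<phi> A + \<phi> B) \<and>
     (\<forall>A\<in>H20. \<forall>r::real. \<phi> (complex_of_real r \<cdot>\<^sub>m A) = complex_of_real r \<cdot>\<^sub>m \<phi> A)"

end

theory Submission
  imports Defs "Jordan_Normal_Form.Determinant"
begin

(* Let X, Y, Z be the images of the Pauli matrices, a real basis of H_2^0 lying in IH_2^0.
   Unitarity of the image of a P + b Q (a^2 + b^2 = 1, a b nonzero) for two Pauli matrices P, Q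
   forces their images to anticommute in the sense X^* Y = - Y^* X and X Y^* = - Y X^*, so
   C = -i X Y^* and D = i Z Y^* are anticommuting hermitian involutions. Anticommutation gives
   tr C = 0, so the +1-eigenspace of C has dimension n = m/2; an orthonormal basis E of it
   (Gram-Schmidt) together with F = D E yields a unitary W = [E F] with C W = W (sigma_z (x) I_n)
   and D W = W (sigma_x (x) I_n). Then A |-> W (A (x) I_n) (sigma_y (x) I_n) W^* Y is real linear
   and agrees with phi on the Pauli matrices, hence on all of H_2^0. The converse implication is
   a direct computation. *)

section \<open>Adjoints, unitary matrices and Kronecker products\<close>

lemma sum_lessThan_add_nat: "(\<Sum>k<a + b. f k) = (\<Sum>k<a. f k) + (\<Sum>k<b. f (a + k :: nat))"
  by (induct b) (auto simp: add.assoc)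

lemma sum_lessThan_mult_div_mod:
  "(\<Sum>k<a * b. f (k div b) (k mod b)) = (\<Sum>i<a. \<Sum>j<b::nat. f i j)"
proof (induct a)
  case (Suc a)
  have "(\<Sum>k<Suc a * b. f (k div b) (k mod b)) = (\<Sum>k<a * b. f (k div b) (k mod b)) + (\<Sum>j<b. f a j)"
    by (simp add: sum_lessThan_add_nat add.commute[of b])
  then show ?case using Suc by simp
qed simp

lemma index_mult_mat_lessThan[simp]:
  "i < dim_row A \<Longrightarrow> j < dim_col B \<Longrightarrow> dim_col A = dim_row B \<Longrightarrow>
   (A * B) $$ (i,j) = (\<Sum>k<dim_col A. A $$ (i,k) * B $$ (k,j))"
  by (auto simp: scalar_prod_def atLeast0LessThan intro!: sum.cong)

declare index_mult_mat(1)[simp del]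

lemma assoc_mult_mat_eq:
  "A \<in> carrier_mat n k \<Longrightarrow> B \<in> carrier_mat k l \<Longrightarrow> X \<in> carrier_mat l c \<Longrightarrow> A * B = C \<Longrightarrow>
   A * (B * X) = C * X"
  by (metis assoc_mult_mat)

lemma mat_eq_uminus_self_imp_zero:
  assumes "(X :: complex mat) \<in> carrier_mat n k" "X = - X"
  shows "X = 0\<^sub>m n k"
proof (rule eq_matI)
  fix i j assume ij: "i < dim_row (0\<^sub>m n k :: complex mat)" "j < dim_col (0\<^sub>m n k :: complex mat)"
  have "X $$ (i,j) = (- X) $$ (i,j)" using assms(2) by simp
  then show "X $$ (i,j) = 0\<^sub>m n k $$ (i,j)" using assms(1) ij by simp
qed (use assms in auto)

lemma adjoint_mat_dim[simp]:
  "dim_row (adjoint_mat A) = dim_col A" "dim_col (adjoint_mat A) = dim_row A"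
  by (auto simp: adjoint_mat_def)

lemma adjoint_mat_index[simp]:
  "i < dim_col A \<Longrightarrow> j < dim_row A \<Longrightarrow> adjoint_mat A $$ (i,j) = cnj (A $$ (j,i))"
  by (auto simp: adjoint_mat_def)

lemma adjoint_mat_carrier[simp, intro]: "A \<in> carrier_mat n m \<Longrightarrow> adjoint_mat A \<in> carrier_mat m n"
  by (auto simp: adjoint_mat_def)

lemma adjoint_mat_adjoint_mat[simp]: "adjoint_mat (adjoint_mat A) = A"
  by (auto simp: adjoint_mat_def)

lemma adjoint_mat_mult:
  "A \<in> carrier_mat n k \<Longrightarrow> B \<in> carrier_mat k m \<Longrightarrow> adjoint_mat (A * B) = adjoint_mat B * adjoint_mat A"
  by (intro eq_matI) (auto simp: mult.commute)

lemma adjoint_mat_add: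
  "A \<in> carrier_mat n m \<Longrightarrow> B \<in> carrier_mat n m \<Longrightarrow> adjoint_mat (A + B) = adjoint_mat A + adjoint_mat B"
  by (intro eq_matI) auto

lemma adjoint_mat_smult: "adjoint_mat (c \<cdot>\<^sub>m A) = cnj c \<cdot>\<^sub>m adjoint_mat A"
  by (intro eq_matI) auto

lemma adjoint_mat_one[simp]: "adjoint_mat (1\<^sub>m n) = 1\<^sub>m n"
  by (intro eq_matI) auto

lemma adjoint_mat_zero[simp]: "adjoint_mat (0\<^sub>m n m) = 0\<^sub>m m n"
  by (intro eq_matI) auto

lemma unitary_matsD:
  assumes "U \<in> unitary_mats n"
  shows "U \<in> carrier_mat n n" "adjoint_mat U * U = 1\<^sub>m n" "U * adjoint_mat U = 1\<^sub>m n"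
  using assms by (auto simp: unitary_mats_def)

lemma unitary_matsI:
  "U \<in> carrier_mat n n \<Longrightarrow> adjoint_mat U * U = 1\<^sub>m n \<Longrightarrow> U \<in> unitary_mats n"
  using mat_mult_left_right_inverse[of "adjoint_mat U" n U] by (auto simp: unitary_mats_def)

lemma unitary_mats_adjoint: "U \<in> unitary_mats n \<Longrightarrow> adjoint_mat U \<in> unitary_mats n"
  by (auto simp: unitary_mats_def)

lemma unitary_mats_one: "1\<^sub>m n \<in> unitary_mats n"
  by (simp add: unitary_mats_def)

lemma unitary_mats_mult:
  assumes U: "U \<in> unitary_mats n" and V: "V \<in> unitary_mats n"
  shows "U * V \<in> unitary_mats n"
proof (rule unitary_matsI)
  note U' = unitary_matsD[OF U] and V' = unitary_matsD[OF V]
  have "adjoint_mat (U * V) * (U * V) = adjoint_mat V * (adjoint_mat U * (U * V))"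
    using U' V' by (simp add: adjoint_mat_mult[of _ n n] assoc_mult_mat[of _ n n _ n _ n])
  also have "adjoint_mat U * (U * V) = V"
    using assoc_mult_mat_eq[OF adjoint_mat_carrier[OF U'(1)] U'(1) V'(1) U'(2)] V'(1) by simp
  finally show "adjoint_mat (U * V) * (U * V) = 1\<^sub>m n"
    using V' by simp
qed (use unitary_matsD[OF U] unitary_matsD[OF V] in auto)

lemma kron_dim[simp]:
  "dim_row (kron A B) = dim_row A * dim_row B" "dim_col (kron A B) = dim_col A * dim_col B"
  by (auto simp: kron_def)

lemma kron_carrier[simp, intro]:
  "A \<in> carrier_mat a1 a2 \<Longrightarrow> B \<in> carrier_mat b1 b2 \<Longrightarrow> kron A B \<in> carrier_mat (a1 * b1) (a2 * b2)"
  by (auto simp: kron_def)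

lemma index_kron:
  "i < dim_row A * dim_row B \<Longrightarrow> j < dim_col A * dim_col B \<Longrightarrow>
   kron A B $$ (i,j) = A $$ (i div dim_row B, j div dim_col B) * B $$ (i mod dim_row B, j mod dim_col B)"
  by (simp add: kron_def)

lemma kron_mult:
  assumes A: "A \<in> carrier_mat a1 a2" and B: "B \<in> carrier_mat b1 b2"
    and C: "C \<in> carrier_mat a2 a3" and D: "D \<in> carrier_mat b2 b3"
  shows "kron A B * kron C D = kron (A * C) (B * D)"
proof (rule eq_matI)
  fix i j assume "i < dim_row (kron (A * C) (B * D))" "j < dim_col (kron (A * C) (B * D))"
  then have ij: "i < a1 * b1" "j < a3 * b3" using A B C D by auto
  then have "b1 > 0" "b3 > 0"
    by (auto intro!: gr0I)
  then have "i div b1 < a1" "j div b3 < a3" "i mod b1 < b1" "j mod b3 < b3"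
    using ij by (auto simp: less_mult_imp_div_less)
  then show "(kron A B * kron C D) $$ (i,j) = kron (A * C) (B * D) $$ (i,j)"
    using A B C D ij sum_lessThan_mult_div_mod[where a=a2 and b=b2 and f="\<lambda>p q. A $$ (i div b1, p) * B $$ (i mod b1, q)
      * (C $$ (p, j div b3) * D $$ (q, j mod b3))"]
    by (simp add: index_kron sum_product mult_ac)
qed (use A B C D in auto)

lemma kron_adjoint: "adjoint_mat (kron A B) = kron (adjoint_mat A) (adjoint_mat B)"
proof (rule eq_matI)
  fix i j assume "i < dim_row (kron (adjoint_mat A) (adjoint_mat B))"
    "j < dim_col (kron (adjoint_mat A) (adjoint_mat B))"
  then have "i < dim_col A * dim_col B" "j < dim_row A * dim_row B" by auto
  moreover from this have "dim_col B > 0" "dim_row B > 0" by (auto intro!: gr0I)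
  ultimately show "adjoint_mat (kron A B) $$ (i,j) = kron (adjoint_mat A) (adjoint_mat B) $$ (i,j)"
    by (simp add: index_kron less_mult_imp_div_less)
qed auto

lemma kron_one: "kron (1\<^sub>m a) (1\<^sub>m b) = 1\<^sub>m (a * b)"
proof (rule eq_matI)
  fix i j assume "i < dim_row (1\<^sub>m (a * b) :: complex mat)" "j < dim_col (1\<^sub>m (a * b) :: complex mat)"
  then have ij: "i < a * b" "j < a * b" by auto
  then have "b > 0" by (auto intro!: gr0I)
  moreover have "i = j \<longleftrightarrow> i div b = j div b \<and> i mod b = j mod b"
    by (metis div_mult_mod_eq)
  ultimately show "kron (1\<^sub>m a) (1\<^sub>m b) $$ (i,j) = 1\<^sub>m (a * b) $$ (i,j)"
    using ij by (simp add: index_kron less_mult_imp_div_less)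
qed auto

lemma kron_add_left:
  "A \<in> carrier_mat a1 a2 \<Longrightarrow> A' \<in> carrier_mat a1 a2 \<Longrightarrow> kron (A + A') B = kron A B + kron A' B"
  by (intro eq_matI) (auto simp: index_kron distrib_right less_mult_imp_div_less)

lemma kron_smult_left: "kron (c \<cdot>\<^sub>m A) B = c \<cdot>\<^sub>m kron A B"
  by (intro eq_matI) (auto simp: index_kron less_mult_imp_div_less)

lemma kron_unitary_mats:
  assumes U: "U \<in> unitary_mats a" and V: "V \<in> unitary_mats b"
  shows "kron U V \<in> unitary_mats (a * b)"
  using unitary_matsD[OF U] unitary_matsD[OF V]
  by (intro unitary_matsI) (auto simp: kron_adjoint kron_mult[of _ a a _ b b] kron_one)

section \<open>Block columns, traces and Gram-Schmidt\<close>

definition hcat :: "'a mat \<Rightarrow> 'a mat \<Rightarrow> 'a mat" where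
  "hcat A B = mat (dim_row A) (dim_col A + dim_col B)
     (\<lambda>(i,j). if j < dim_col A then A $$ (i,j) else B $$ (i, j - dim_col A))"

lemma hcat_dim[simp]: "dim_row (hcat A B) = dim_row A" "dim_col (hcat A B) = dim_col A + dim_col B"
  by (auto simp: hcat_def)

lemma hcat_carrier[simp, intro]:
  "A \<in> carrier_mat n a \<Longrightarrow> B \<in> carrier_mat n b \<Longrightarrow> hcat A B \<in> carrier_mat n (a + b)"
  by (auto simp: hcat_def)

lemma index_hcat:
  "i < dim_row A \<Longrightarrow> j < dim_col A + dim_col B \<Longrightarrow>
   hcat A B $$ (i,j) = (if j < dim_col A then A $$ (i,j) else B $$ (i, j - dim_col A))"
  by (auto simp: hcat_def)

lemma mult_hcat:
  "M \<in> carrier_mat k n \<Longrightarrow> A \<in> carrier_mat n a \<Longrightarrow> B \<in> carrier_mat n b \<Longrightarrow>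
   M * hcat A B = hcat (M * A) (M * B)"
  by (intro eq_matI) (auto simp: index_hcat)

lemma hcat_mult_adjoint_hcat:
  assumes "A \<in> carrier_mat n a" "B \<in> carrier_mat n b" "A' \<in> carrier_mat n' a" "B' \<in> carrier_mat n' b"
  shows "hcat A B * adjoint_mat (hcat A' B') = A * adjoint_mat A' + B * adjoint_mat B'"
  using assms by (intro eq_matI) (auto simp: sum_lessThan_add_nat index_hcat)

lemma index_adjoint_hcat_mult_hcat:
  assumes "A \<in> carrier_mat n a" "B \<in> carrier_mat n b" "A' \<in> carrier_mat n a'" "B' \<in> carrier_mat n b'"
    and "i < a + b" "j < a' + b'"
  shows "(adjoint_mat (hcat A B) * hcat A' B') $$ (i,j) =
    (if i < a then if j < a' then (adjoint_mat A * A') $$ (i,j) else (adjoint_mat A * B') $$ (i, j - a')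
     else if j < a' then (adjoint_mat B * A') $$ (i - a, j) else (adjoint_mat B * B') $$ (i - a, j - a'))"
  using assms by (auto simp: index_hcat)

lemma hcat_mult_kron_one:
  assumes A: "A \<in> carrier_mat k n" and B: "B \<in> carrier_mat k n" and M: "M \<in> carrier_mat 2 2"
  shows "hcat A B * kron M (1\<^sub>m n) =
    hcat (M $$ (0,0) \<cdot>\<^sub>m A + M $$ (1,0) \<cdot>\<^sub>m B) (M $$ (0,1) \<cdot>\<^sub>m A + M $$ (1,1) \<cdot>\<^sub>m B)"
proof (rule eq_matI)
  fix i j assume "i < dim_row (hcat (M $$ (0,0) \<cdot>\<^sub>m A + M $$ (1,0) \<cdot>\<^sub>m B) (M $$ (0,1) \<cdot>\<^sub>m A + M $$ (1,1) \<cdot>\<^sub>m B))"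
    "j < dim_col (hcat (M $$ (0,0) \<cdot>\<^sub>m A + M $$ (1,0) \<cdot>\<^sub>m B) (M $$ (0,1) \<cdot>\<^sub>m A + M $$ (1,1) \<cdot>\<^sub>m B))"
  then have i: "i < k" and j: "j < n + n" using A B by auto
  have "n > 0" using j by simp
  then have kron_entry: "kron M (1\<^sub>m n) $$ (l, j) = (if l = j mod n then M $$ (0, j div n) else 0)"
    "kron M (1\<^sub>m n) $$ (n + l, j) = (if l = j mod n then M $$ (1, j div n) else 0)"
    if "l < n" for l
    using that j M by (simp_all add: index_kron mult_2)
  have "(hcat A B * kron M (1\<^sub>m n)) $$ (i,j)
      = (\<Sum>l<n. A $$ (i,l) * kron M (1\<^sub>m n) $$ (l, j))
      + (\<Sum>l<n. B $$ (i,l) * kron M (1\<^sub>m n) $$ (n + l, j))"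
    using A B M i j by (simp add: sum_lessThan_add_nat index_hcat mult_2)
  also have "\<dots> = M $$ (0, j div n) * A $$ (i, j mod n) + M $$ (1, j div n) * B $$ (i, j mod n)"
    using j by (simp add: kron_entry if_distrib[of "\<lambda>x. _ * x"] sum.delta' mult.commute cong: if_cong)
  also have "\<dots> = hcat (M $$ (0,0) \<cdot>\<^sub>m A + M $$ (1,0) \<cdot>\<^sub>m B) (M $$ (0,1) \<cdot>\<^sub>m A + M $$ (1,1) \<cdot>\<^sub>m B) $$ (i,j)"
    using A B i j by (auto simp: index_hcat le_div_geq le_mod_geq)
  finally show "(hcat A B * kron M (1\<^sub>m n)) $$ (i,j) = \<dots>" .
qed (use A B M in auto)

definition mat_trace :: "'a :: comm_ring_1 mat \<Rightarrow> 'a" where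
  "mat_trace A = (\<Sum>i<dim_row A. A $$ (i,i))"

lemma mat_trace_mult_comm:
  assumes "A \<in> carrier_mat n k" "B \<in> carrier_mat k n"
  shows "mat_trace (A * B) = mat_trace (B * A)"
proof -
  have "mat_trace (A * B) = (\<Sum>i<n. \<Sum>j<k. A $$ (i,j) * B $$ (j,i))"
    using assms by (simp add: mat_trace_def)
  also have "\<dots> = (\<Sum>j<k. \<Sum>i<n. B $$ (j,i) * A $$ (i,j))"
    by (subst sum.swap) (simp add: mult.commute)
  also have "\<dots> = mat_trace (B * A)"
    using assms by (simp add: mat_trace_def)
  finally show ?thesis .
qed

lemma mat_trace_add: "A \<in> carrier_mat n n \<Longrightarrow> B \<in> carrier_mat n n \<Longrightarrow> mat_trace (A + B) = mat_trace A + mat_trace B"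
  by (simp add: mat_trace_def sum.distrib)

lemma mat_trace_smult: "A \<in> carrier_mat n n \<Longrightarrow> mat_trace (c \<cdot>\<^sub>m A) = c * mat_trace A"
  by (simp add: mat_trace_def sum_distrib_left)

lemma mat_trace_uminus: "A \<in> carrier_mat n n \<Longrightarrow> mat_trace (- A) = - mat_trace A"
  by (simp add: mat_trace_def sum_negf)

lemma mat_trace_one[simp]: "mat_trace (1\<^sub>m n) = of_nat n"
  by (simp add: mat_trace_def)

definition unit_col :: "nat \<Rightarrow> nat \<Rightarrow> 'a :: zero_neq_one mat" where
  "unit_col m j = mat m 1 (\<lambda>(i,_). if i = j then 1 else 0)"

lemma unit_col_carrier[simp]: "unit_col m j \<in> carrier_mat m 1"
  by (simp add: unit_col_def)

lemma index_mult_unit_col: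
  assumes "(A :: 'a :: semiring_1 mat) \<in> carrier_mat n m" "i < n" "j < m"
  shows "(A * unit_col m j) $$ (i,0) = A $$ (i,j)"
  using assms by (simp add: unit_col_def if_distrib[of "\<lambda>x. _ * x"] sum.delta' cong: if_cong)

lemma eq_mat_by_unit_cols:
  assumes "(A :: 'a :: semiring_1 mat) \<in> carrier_mat n m" "B \<in> carrier_mat n m"
    and "\<And>j. j < m \<Longrightarrow> A * unit_col m j = B * unit_col m j"
  shows "A = B"
proof (rule eq_matI)
  fix i j assume "i < dim_row B" "j < dim_col B"
  with assms show "A $$ (i,j) = B $$ (i,j)"
    by (metis carrier_matD index_mult_unit_col)
qed (use assms in auto)

lemma col_mat_normalize:
  assumes q: "q \<in> carrier_mat m 1" and q0: "q \<noteq> 0\<^sub>m m 1"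
  obtains c s :: complex where "adjoint_mat (c \<cdot>\<^sub>m q) * (c \<cdot>\<^sub>m q) = 1\<^sub>m 1" "q = s \<cdot>\<^sub>m (c \<cdot>\<^sub>m q)"
proof -
  define N where "N = (\<Sum>k<m. (cmod (q $$ (k,0)))\<^sup>2)"
  obtain k0 where k0: "k0 < m" "q $$ (k0,0) \<noteq> 0"
    using q q0 by (metis carrier_matD eq_matI index_zero_mat(1) less_one zero_carrier_mat)
  have "0 < (cmod (q $$ (k0,0)))\<^sup>2" using k0 by simp
  also have "\<dots> \<le> N" unfolding N_def using k0 by (intro member_le_sum) auto
  finally have N: "N > 0" .
  let ?c = "complex_of_real (1 / sqrt N)"
  have "adjoint_mat (?c \<cdot>\<^sub>m q) * (?c \<cdot>\<^sub>m q) = 1\<^sub>m 1"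
  proof (rule eq_matI)
    fix i j assume "i < dim_row (1\<^sub>m 1 :: complex mat)" "j < dim_col (1\<^sub>m 1 :: complex mat)"
    then have "i = 0" "j = 0" by auto
    have "(adjoint_mat (?c \<cdot>\<^sub>m q) * (?c \<cdot>\<^sub>m q)) $$ (0,0)
        = (\<Sum>k<m. complex_of_real ((cmod (q $$ (k,0)))\<^sup>2 / N))"
      using q N by (auto simp: complex_norm_square power_divide field_simps
        simp flip: of_real_mult of_real_power intro!: sum.cong)
    also have "\<dots> = 1"
      using N unfolding of_real_sum[symmetric] sum_divide_distrib[symmetric] N_def[symmetric] by simp
    finally show "(adjoint_mat (?c \<cdot>\<^sub>m q) * (?c \<cdot>\<^sub>m q)) $$ (i,j) = 1\<^sub>m 1 $$ (i,j)"
      using \<open>i = 0\<close> \<open>j = 0\<close> by simp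
  qed (use q in auto)
  moreover have "q = complex_of_real (sqrt N) \<cdot>\<^sub>m (?c \<cdot>\<^sub>m q)"
    using q N by (intro eq_matI) auto
  ultimately show ?thesis by (rule that)
qed

lemma isometry_hcat_unit_col:
  assumes E: "E \<in> carrier_mat m r" "adjoint_mat E * E = 1\<^sub>m r"
    and u: "u \<in> carrier_mat m 1" "adjoint_mat u * u = 1\<^sub>m 1" and Eu: "adjoint_mat E * u = 0\<^sub>m r 1"
  shows "adjoint_mat (hcat E u) * hcat E u = 1\<^sub>m (r + 1)"
    and "adjoint_mat u * E = 0\<^sub>m 1 r"
    and "\<And>x. x \<in> carrier_mat m 1 \<Longrightarrow>
      hcat E u * adjoint_mat (hcat E u) * x = E * (adjoint_mat E * x) + u * (adjoint_mat u * x)"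
    and "\<And>x. x \<in> carrier_mat m 1 \<Longrightarrow> E * adjoint_mat E * x = x \<Longrightarrow>
      hcat E u * adjoint_mat (hcat E u) * x = x"
proof -
  have aE: "adjoint_mat E \<in> carrier_mat r m" and au: "adjoint_mat u \<in> carrier_mat 1 m"
    using E u by auto
  show uE: "adjoint_mat u * E = 0\<^sub>m 1 r"
    using arg_cong[OF Eu, of adjoint_mat] adjoint_mat_mult[OF aE u(1)] by simp
  show "adjoint_mat (hcat E u) * hcat E u = 1\<^sub>m (r + 1)"
  proof (rule eq_matI)
    fix i j assume "i < dim_row (1\<^sub>m (r + 1) :: complex mat)" "j < dim_col (1\<^sub>m (r + 1) :: complex mat)"
    then have ij: "i < r + 1" "j < r + 1" by auto
    show "(adjoint_mat (hcat E u) * hcat E u) $$ (i,j) = 1\<^sub>m (r + 1) $$ (i,j)"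
      unfolding index_adjoint_hcat_mult_hcat[OF E(1) u(1) E(1) u(1) ij]
      using ij E(2) u(2) Eu uE by (auto simp del: index_mult_mat_lessThan simp: less_Suc_eq)
  qed (use E(1) u(1) in auto)
  show proj: "hcat E u * adjoint_mat (hcat E u) * x = E * (adjoint_mat E * x) + u * (adjoint_mat u * x)"
    if x: "x \<in> carrier_mat m 1" for x
    unfolding hcat_mult_adjoint_hcat[OF E(1) u(1) E(1) u(1)] using E(1) aE u(1) au x
    by (simp add: add_mult_distrib_mat[of _ m m] assoc_mult_mat[OF E(1) aE x] assoc_mult_mat[OF u(1) au x])
  show "hcat E u * adjoint_mat (hcat E u) * x = x"
    if x: "x \<in> carrier_mat m 1" and Ex: "E * adjoint_mat E * x = x" for x
  proof -
    have "adjoint_mat u * x = adjoint_mat u * (E * (adjoint_mat E * x))"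
      using Ex assoc_mult_mat[OF E(1) aE x] by simp
    also have "\<dots> = 0\<^sub>m 1 1"
      using assoc_mult_mat_eq[OF au E(1) mult_carrier_mat[OF aE x] uE] E(1) x by simp
    finally show ?thesis
      using proj[OF x] Ex assoc_mult_mat[OF E(1) aE x] x u(1) by simp
  qed
qed

lemma isometry_residual:
  assumes E: "E \<in> carrier_mat m r" "adjoint_mat E * E = 1\<^sub>m r" and p: "p \<in> carrier_mat m 1"
  shows "adjoint_mat E * (p - E * (adjoint_mat E * p)) = 0\<^sub>m r 1"
    and "E * (adjoint_mat E * p) + (p - E * (adjoint_mat E * p)) = p"
    and "P \<in> carrier_mat m m \<Longrightarrow> P * E = E \<Longrightarrow> P * p = p \<Longrightarrow>
      P * (p - E * (adjoint_mat E * p)) = p - E * (adjoint_mat E * p)"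
proof -
  have aE: "adjoint_mat E \<in> carrier_mat r m" using E by auto
  have EEp: "E * (adjoint_mat E * p) \<in> carrier_mat m 1"
    using E(1) aE p by (rule mult_carrier_mat[OF _ mult_carrier_mat])
  show "adjoint_mat E * (p - E * (adjoint_mat E * p)) = 0\<^sub>m r 1"
    using E aE p
    by (simp add: mult_minus_distrib_mat[OF aE p EEp] assoc_mult_mat_eq[OF aE E(1) mult_carrier_mat[OF aE p] E(2)]
      minus_r_inv_mat[OF mult_carrier_mat[OF aE p]])
  show "E * (adjoint_mat E * p) + (p - E * (adjoint_mat E * p)) = p"
    using p EEp by (intro eq_matI) auto
  show "P * (p - E * (adjoint_mat E * p)) = p - E * (adjoint_mat E * p)"
    if P: "P \<in> carrier_mat m m" "P * E = E" "P * p = p"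
    using E aE p P
    by (simp add: mult_minus_distrib_mat[OF P(1) p EEp] assoc_mult_mat_eq[OF P(1) E(1) mult_carrier_mat[OF aE p] P(2)])
qed

lemma isometry_extend:
  assumes E: "E \<in> carrier_mat m r" "adjoint_mat E * E = 1\<^sub>m r" and p: "p \<in> carrier_mat m 1"
    and P: "P \<in> carrier_mat m m" "P * E = E" "P * p = p"
  obtains r' E' where "E' \<in> carrier_mat m r'" "adjoint_mat E' * E' = 1\<^sub>m r'" "P * E' = E'"
    "E' * adjoint_mat E' * p = p"
    "\<And>x. x \<in> carrier_mat m 1 \<Longrightarrow> E * adjoint_mat E * x = x \<Longrightarrow> E' * adjoint_mat E' * x = x"
proof -
  have aE: "adjoint_mat E \<in> carrier_mat r m" using E by auto
  define q where "q = p - E * (adjoint_mat E * p)"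
  have q: "q \<in> carrier_mat m 1" using p E unfolding q_def by auto
  have EEp: "E * (adjoint_mat E * p) \<in> carrier_mat m 1"
    using E(1) aE p by (rule mult_carrier_mat[OF _ mult_carrier_mat])
  note residual = isometry_residual[OF E p, folded q_def]
  note p_decomp = residual(2)[symmetric] and Eq = residual(1) and Pq = residual(3)[OF P]
  show ?thesis
  proof (cases "q = 0\<^sub>m m 1")
    case True
    then have "E * (adjoint_mat E * p) = p"
      using p_decomp right_add_zero_mat[OF EEp] by metis
    then have "E * adjoint_mat E * p = p"
      using assoc_mult_mat[OF E(1) aE p] by simp
    then show ?thesis using E P by (intro that[of E]) auto
  next
    case False
    obtain c s where "adjoint_mat (c \<cdot>\<^sub>m q) * (c \<cdot>\<^sub>m q) = 1\<^sub>m 1" "q = s \<cdot>\<^sub>m (c \<cdot>\<^sub>m q)"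
      using col_mat_normalize[OF q False] .
    moreover define u where "u = c \<cdot>\<^sub>m q"
    ultimately have uu: "adjoint_mat u * u = 1\<^sub>m 1" and qs: "q = s \<cdot>\<^sub>m u" by simp_all
    have u: "u \<in> carrier_mat m 1" and au: "adjoint_mat u \<in> carrier_mat 1 m"
      using q unfolding u_def by auto
    have Eu: "adjoint_mat E * u = 0\<^sub>m r 1"
      unfolding u_def using Eq by (simp add: mult_smult_distrib[OF aE q])
    note E' = isometry_hcat_unit_col[OF E u uu Eu]
    have "P * u = u"
      unfolding u_def using Pq by (simp add: mult_smult_distrib[OF P(1) q])
    then have PE': "P * hcat E u = hcat E u"
      using P(2) by (simp add: mult_hcat[OF P(1) E(1) u])
    have "hcat E u * adjoint_mat (hcat E u) * p = p"
    proof -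
      have "adjoint_mat u * p = adjoint_mat u * (E * (adjoint_mat E * p)) + adjoint_mat u * q"
        by (subst p_decomp) (rule mult_add_distrib_mat[OF au EEp q])
      also have "adjoint_mat u * (E * (adjoint_mat E * p)) = 0\<^sub>m 1 1"
        using assoc_mult_mat_eq[OF au E(1) mult_carrier_mat[OF aE p] E'(2)] E(1) p by simp
      also have "adjoint_mat u * q = s \<cdot>\<^sub>m 1\<^sub>m 1"
        unfolding qs using uu by (simp add: mult_smult_distrib[OF au u])
      moreover have "u * (s \<cdot>\<^sub>m 1\<^sub>m 1) = q"
        using u qs by (intro eq_matI) auto
      ultimately have "u * (adjoint_mat u * p) = q" by simp
      then show ?thesis using E'(3)[OF p] p_decomp by simp
    qed
    then show ?thesis by (rule that[OF hcat_carrier[OF E(1) u] E'(1) PE' _ E'(4)])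
  qed
qed

lemma hermitian_idempotent_factor:
  assumes P: "P \<in> carrier_mat m m" "P * P = P" "adjoint_mat P = P"
  obtains r E where "E \<in> carrier_mat m r" "adjoint_mat E * E = 1\<^sub>m r" "P * E = E" "E * adjoint_mat E = P"
proof -
  let ?p = "\<lambda>j. P * unit_col m j"
  have Pp: "?p j \<in> carrier_mat m 1" "P * ?p j = ?p j" for j
    using mult_carrier_mat[OF P(1) unit_col_carrier] assoc_mult_mat_eq[OF P(1) P(1) unit_col_carrier P(2)]
    by auto
  \<comment> \<open>Gram-Schmidt along the columns of P.\<close>
  have "\<exists>r E. E \<in> carrier_mat m r \<and> adjoint_mat E * E = 1\<^sub>m r \<and> P * E = E \<and>
          (\<forall>j<k. E * adjoint_mat E * ?p j = ?p j)" for k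
  proof (induct k)
    case 0
    have "adjoint_mat (0\<^sub>m m 0) * 0\<^sub>m m 0 = (1\<^sub>m 0 :: complex mat)" by (intro eq_matI) auto
    then show ?case using P(1) by (intro exI[of _ 0] exI[of _ "0\<^sub>m m 0"]) auto
  next
    case (Suc k)
    then obtain r E where E: "E \<in> carrier_mat m r" "adjoint_mat E * E = 1\<^sub>m r" "P * E = E"
      and fixed: "\<forall>j<k. E * adjoint_mat E * ?p j = ?p j" by blast
    obtain r' E' where E': "E' \<in> carrier_mat m r'" "adjoint_mat E' * E' = 1\<^sub>m r'" "P * E' = E'"
      and new: "E' * adjoint_mat E' * ?p k = ?p k"
      and old: "\<And>x. x \<in> carrier_mat m 1 \<Longrightarrow> E * adjoint_mat E * x = x \<Longrightarrow> E' * adjoint_mat E' * x = x"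
      using isometry_extend[OF E(1,2) Pp(1)[of k] P(1) E(3) Pp(2)[of k]] by blast
    have "\<forall>j<Suc k. E' * adjoint_mat E' * ?p j = ?p j"
      using fixed new old[OF Pp(1)] by (auto simp: less_Suc_eq)
    with E' show ?case by blast
  qed
  then obtain r E where E: "E \<in> carrier_mat m r" "adjoint_mat E * E = 1\<^sub>m r" "P * E = E"
    and fixed: "\<forall>j<m. E * adjoint_mat E * ?p j = ?p j" by blast
  have aE: "adjoint_mat E \<in> carrier_mat r m" using E by auto
  have EE: "E * adjoint_mat E \<in> carrier_mat m m" using E(1) aE by simp
  have EEP: "E * adjoint_mat E * P = P"
  proof (rule eq_mat_by_unit_cols)
    fix j assume "j < m"
    then show "E * adjoint_mat E * P * unit_col m j = P * unit_col m j"
      using fixed assoc_mult_mat[OF EE P(1) unit_col_carrier] by simp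
  qed (use EE P(1) in auto)
  have "P = adjoint_mat (E * adjoint_mat E * P)" using EEP P(3) by simp
  also have "\<dots> = P * (E * adjoint_mat E)"
    using P(3) by (simp add: adjoint_mat_mult[OF EE P(1)] adjoint_mat_mult[OF E(1) aE])
  also have "\<dots> = E * adjoint_mat E"
    using assoc_mult_mat_eq[OF P(1) E(1) aE E(3)] .
  finally have "E * adjoint_mat E = P" ..
  with E show ?thesis by (rule that)
qed

section \<open>Pauli matrices and H_2^0\<close>

definition pauli_x :: "complex mat" where
  "pauli_x = mat 2 2 (\<lambda>(i,j). if i = j then 0 else 1)"

definition pauli_y :: "complex mat" where
  "pauli_y = mat 2 2 (\<lambda>(i,j). if i = j then 0 else if i = 0 then - \<i> else \<i>)"

definition pauli_z :: "complex mat" where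
  "pauli_z = mat 2 2 (\<lambda>(i,j). if i = j then if i = 0 then 1 else - 1 else 0)"

lemma pauli_carrier[simp]:
  "pauli_x \<in> carrier_mat 2 2" "pauli_y \<in> carrier_mat 2 2" "pauli_z \<in> carrier_mat 2 2"
  by (auto simp: pauli_x_def pauli_y_def pauli_z_def)

lemma mat2_eqI:
  assumes "A \<in> carrier_mat 2 2" "B \<in> carrier_mat 2 2"
    "A $$ (0,0) = B $$ (0,0)" "A $$ (0,Suc 0) = B $$ (0,Suc 0)"
    "A $$ (Suc 0,0) = B $$ (Suc 0,0)" "A $$ (Suc 0,Suc 0) = B $$ (Suc 0,Suc 0)"
  shows "A = B"
  using assms by (intro eq_matI) (auto dest!: less_2_cases)

lemma sum_lessThan_2: "(\<Sum>k<2::nat. f k) = f 0 + (f 1 :: 'a :: comm_monoid_add)"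
  by (simp add: numeral_2_eq_2)

lemma pauli_mult:
  "pauli_x * pauli_y = \<i> \<cdot>\<^sub>m pauli_z" "pauli_y * pauli_y = 1\<^sub>m 2" "pauli_z * pauli_y = - \<i> \<cdot>\<^sub>m pauli_x"
  by (auto intro!: mat2_eqI simp: sum_lessThan_2 pauli_x_def pauli_y_def pauli_z_def)

definition pauli_comb :: "real \<Rightarrow> real \<Rightarrow> real \<Rightarrow> complex mat" where
  "pauli_comb a b c = of_real a \<cdot>\<^sub>m pauli_x + of_real b \<cdot>\<^sub>m pauli_y + of_real c \<cdot>\<^sub>m pauli_z"

lemma pauli_comb_carrier[simp]: "pauli_comb a b c \<in> carrier_mat 2 2"
  by (simp add: pauli_comb_def)

lemma pauli_comb_dim[simp]: "dim_row (pauli_comb a b c) = 2" "dim_col (pauli_comb a b c) = 2"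
  by (simp_all add: pauli_comb_def pauli_z_def)

lemma index_pauli_comb:
  "pauli_comb a b c $$ (0,0) = c" "pauli_comb a b c $$ (0,Suc 0) = a - \<i> * b"
  "pauli_comb a b c $$ (Suc 0,0) = a + \<i> * b" "pauli_comb a b c $$ (Suc 0,Suc 0) = - c"
  by (auto simp: pauli_comb_def pauli_x_def pauli_y_def pauli_z_def)

lemma pauli_eq_pauli_comb:
  "pauli_x = pauli_comb 1 0 0" "pauli_y = pauli_comb 0 1 0" "pauli_z = pauli_comb 0 0 1"
  by (auto intro!: mat2_eqI simp: index_pauli_comb pauli_x_def pauli_y_def pauli_z_def)

lemma pauli_comb_in_H20: "pauli_comb a b c \<in> H20"
proof -
  have "adjoint_mat (pauli_comb a b c) = pauli_comb a b c"
    by (rule mat2_eqI) (auto simp: index_pauli_comb)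
  then show ?thesis unfolding H20_def by (simp add: index_pauli_comb)
qed

lemma pauli_comb_mult_self: "pauli_comb a b c * pauli_comb a b c = of_real (a\<^sup>2 + b\<^sup>2 + c\<^sup>2) \<cdot>\<^sub>m 1\<^sub>m 2"
  by (rule mat2_eqI) (auto simp: sum_lessThan_2 index_pauli_comb algebra_simps power2_eq_square complex_eq_iff)

lemma pauli_comb_in_IH20:
  assumes "a\<^sup>2 + b\<^sup>2 + c\<^sup>2 = 1"
  shows "pauli_comb a b c \<in> IH20"
proof -
  have "adjoint_mat (pauli_comb a b c) = pauli_comb a b c"
    using pauli_comb_in_H20 by (simp add: H20_def)
  moreover have "pauli_comb a b c * pauli_comb a b c = 1\<^sub>m 2"
    using assms by (simp add: pauli_comb_mult_self) (intro eq_matI, auto)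
  ultimately show ?thesis
    unfolding IH20_def by (auto intro: pauli_comb_in_H20 unitary_matsI)
qed

lemma H20_pauli_comb:
  assumes "A \<in> H20"
  shows "A = pauli_comb (Re (A $$ (Suc 0,0))) (Im (A $$ (Suc 0,0))) (Re (A $$ (0,0)))"
proof -
  have A: "A \<in> carrier_mat 2 2" and herm: "adjoint_mat A = A" and tr: "A $$ (0,0) + A $$ (Suc 0,Suc 0) = 0"
    using assms unfolding H20_def by auto
  have "cnj (A $$ (0,0)) = A $$ (0,0)" "cnj (A $$ (Suc 0,0)) = A $$ (0,Suc 0)"
    using A arg_cong[OF herm, of "\<lambda>M. M $$ (0,0)"] arg_cong[OF herm, of "\<lambda>M. M $$ (0,Suc 0)"] by auto
  then show ?thesis
    using A tr by (intro mat2_eqI) (auto simp: index_pauli_comb complex_eq_iff eq_neg_iff_add_eq_0 add.commute)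
qed

lemma pauli_in_IH20: "pauli_x \<in> IH20" "pauli_y \<in> IH20" "pauli_z \<in> IH20"
  unfolding pauli_eq_pauli_comb by (auto intro: pauli_comb_in_IH20)

lemma IH20_subset_H20: "IH20 \<subseteq> H20"
  by (simp add: IH20_def)

lemma H20_add: "A \<in> H20 \<Longrightarrow> B \<in> H20 \<Longrightarrow> A + B \<in> H20"
  unfolding H20_def by (auto simp: adjoint_mat_add[of _ 2 2] algebra_simps)

lemma H20_smult: "A \<in> H20 \<Longrightarrow> complex_of_real r \<cdot>\<^sub>m A \<in> H20"
  unfolding H20_def by (auto simp: adjoint_mat_smult simp flip: distrib_left)

lemma real_linear_on_H20_pauli_comb:
  assumes "real_linear_on_H20 f"
  shows "f (pauli_comb a b c) = of_real a \<cdot>\<^sub>m f pauli_x + of_real b \<cdot>\<^sub>m f pauli_y + of_real c \<cdot>\<^sub>m f pauli_z"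
  using assms pauli_in_IH20 IH20_subset_H20 unfolding pauli_comb_def real_linear_on_H20_def
  by (simp add: subset_iff H20_add H20_smult)

lemma real_linear_on_H20_eqI:
  assumes "real_linear_on_H20 f" "real_linear_on_H20 g"
    and "f pauli_x = g pauli_x" "f pauli_y = g pauli_y" "f pauli_z = g pauli_z" and "A \<in> H20"
  shows "f A = g A"
  using assms H20_pauli_comb[OF assms(6)] real_linear_on_H20_pauli_comb[OF assms(1)]
    real_linear_on_H20_pauli_comb[OF assms(2)] by metis

section \<open>Anticommuting hermitian involutions\<close>

lemma hcat_mult_kron_pauli_z:
  "A \<in> carrier_mat k n \<Longrightarrow> B \<in> carrier_mat k n \<Longrightarrow> hcat A B * kron pauli_z (1\<^sub>m n) = hcat A (- B)"
  by (subst hcat_mult_kron_one) (auto simp: pauli_z_def intro!: arg_cong2[where f = hcat] eq_matI)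

lemma hcat_mult_kron_pauli_x:
  "A \<in> carrier_mat k n \<Longrightarrow> B \<in> carrier_mat k n \<Longrightarrow> hcat A B * kron pauli_x (1\<^sub>m n) = hcat B A"
  by (subst hcat_mult_kron_one) (auto simp: pauli_x_def intro!: arg_cong2[where f = hcat] eq_matI)

lemma anticommuting_involution_trace_zero:
  assumes C: "C \<in> carrier_mat n n" and D: "D \<in> carrier_mat n n"
    and DD: "D * D = 1\<^sub>m n" and CD: "C * D = - (D * C)"
  shows "mat_trace C = (0 :: complex)"
proof -
  have "mat_trace C = mat_trace (C * D * D)"
    using assoc_mult_mat[OF C D D] DD C by simp
  also have "\<dots> = mat_trace (D * (C * D))"
    using C D by (intro mat_trace_mult_comm[of _ n n]) auto
  also have "\<dots> = - mat_trace (D * D * C)"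
    using C D CD by (simp add: assoc_mult_mat[OF D D C] mat_trace_uminus[of _ n])
  also have "\<dots> = - mat_trace C"
    using DD C by simp
  finally show ?thesis by simp
qed

lemma hermitian_involution_eigenspace:
  assumes C: "C \<in> carrier_mat m m" "adjoint_mat C = C" "C * C = 1\<^sub>m m" and tr: "mat_trace C = 0"
  obtains n E where "m = 2 * n" "E \<in> carrier_mat m n" "adjoint_mat E * E = 1\<^sub>m n" "C * E = E"
proof -
  define P where "P = (1/2) \<cdot>\<^sub>m (1\<^sub>m m + C)"
  have IC: "1\<^sub>m m + C \<in> carrier_mat m m" using C by simp
  have P: "P \<in> carrier_mat m m" unfolding P_def using IC by simp
  have CP: "C * P = P"
    unfolding P_def using C
    by (simp add: mult_smult_distrib[OF C(1) IC] mult_add_distrib_mat[OF C(1) one_carrier_mat C(1)])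
      (intro eq_matI, auto)
  have "P * P = P"
    using CP P
    by (subst (1) P_def, simp add: mult_smult_assoc_mat[OF IC P] add_mult_distrib_mat[OF one_carrier_mat C(1) P])
      (intro eq_matI, auto)
  moreover have "adjoint_mat P = P"
    unfolding P_def using C by (simp add: adjoint_mat_smult adjoint_mat_add[of _ m m])
  ultimately obtain n E where E: "E \<in> carrier_mat m n" "adjoint_mat E * E = 1\<^sub>m n" "P * E = E"
    and EEP: "E * adjoint_mat E = P"
    using hermitian_idempotent_factor[OF P] by blast
  have "C * E = E" using assoc_mult_mat_eq[OF C(1) P E(1) CP] E(3) by simp
  moreover have "m = 2 * n"
  proof -
    have "of_nat n = mat_trace (adjoint_mat E * E)" using E(2) by simp
    also have "\<dots> = mat_trace P"
      using E(1) EEP by (simp add: mat_trace_mult_comm[of _ n m])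
    also have "\<dots> = of_nat m / 2"
      unfolding P_def using C tr by (simp add: mat_trace_smult[of _ m] mat_trace_add[of _ m])
    finally have "(of_nat m :: complex) = of_nat (2 * n)" by (simp add: mult.commute)
    then show ?thesis by (simp only: of_nat_eq_iff)
  qed
  ultimately show ?thesis using E that by blast
qed

lemma anticommuting_hermitian_involutions_pauli_form:
  assumes C: "C \<in> carrier_mat m m" "adjoint_mat C = C" "C * C = 1\<^sub>m m"
    and D: "D \<in> carrier_mat m m" "adjoint_mat D = D" "D * D = 1\<^sub>m m"
    and CD: "C * D = - (D * C)"
  obtains n W where "m = 2 * n" "W \<in> unitary_mats m"
    "C * W = W * kron pauli_z (1\<^sub>m n)" "D * W = W * kron pauli_x (1\<^sub>m n)"
proof -
  obtain n E where mn: "m = 2 * n" and E: "E \<in> carrier_mat m n" "adjoint_mat E * E = 1\<^sub>m n" "C * E = E"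
    using hermitian_involution_eigenspace[OF C anticommuting_involution_trace_zero[OF C(1) D(1) D(3) CD]] .
  have aE: "adjoint_mat E \<in> carrier_mat n m" using E by auto
  \<comment> \<open>E spans the +1-eigenspace of C, and D maps it isometrically onto the -1-eigenspace.\<close>
  define F where "F = D * E"
  have F: "F \<in> carrier_mat m n" unfolding F_def using D E by auto
  have CF: "C * F = - F"
  proof -
    have "C * F = C * D * E" unfolding F_def using assoc_mult_mat[OF C(1) D(1) E(1)] by simp
    also have "\<dots> = - (D * (C * E))" using CD assoc_mult_mat[OF D(1) C(1) E(1)] C(1) D(1) E(1) by simp
    finally show ?thesis using E(3) unfolding F_def by simp
  qed
  have DF: "D * F = E" unfolding F_def using assoc_mult_mat_eq[OF D(1) D(1) E(1) D(3)] E(1) by simp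
  have EC: "adjoint_mat E * C = adjoint_mat E" using adjoint_mat_mult[OF C(1) E(1)] E(3) C(2) by simp
  have "adjoint_mat E * F = - (adjoint_mat E * F)"
    using assoc_mult_mat_eq[OF aE C(1) F EC] CF E(1) F by simp
  then have EF: "adjoint_mat E * F = 0\<^sub>m n n" using aE F by (intro mat_eq_uminus_self_imp_zero) auto
  have FE: "adjoint_mat F * E = 0\<^sub>m n n"
    using arg_cong[OF EF, of adjoint_mat] adjoint_mat_mult[OF aE F] by simp
  have "adjoint_mat F * F = adjoint_mat E * D * (D * E)"
    unfolding F_def using adjoint_mat_mult[OF D(1) E(1)] D(2) by simp
  also have "\<dots> = adjoint_mat E * E"
    using assoc_mult_mat[OF aE D(1) F] assoc_mult_mat_eq[OF D(1) D(1) E(1) D(3)] E(1)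
    unfolding F_def by simp
  finally have FF: "adjoint_mat F * F = 1\<^sub>m n" using E(2) by simp
  define W where "W = hcat E F"
  have W: "W \<in> carrier_mat m m" unfolding W_def using hcat_carrier[OF E(1) F] mn by (simp add: mult_2)
  have "adjoint_mat W * W = 1\<^sub>m m"
  proof (rule eq_matI)
    fix i j assume "i < dim_row (1\<^sub>m m :: complex mat)" "j < dim_col (1\<^sub>m m :: complex mat)"
    then have ij: "i < n + n" "j < n + n" using mn by auto
    show "(adjoint_mat W * W) $$ (i,j) = 1\<^sub>m m $$ (i,j)"
      unfolding W_def index_adjoint_hcat_mult_hcat[OF E(1) F E(1) F ij]
      using ij E(2) EF FE FF mn by (auto simp del: index_mult_mat_lessThan)
  qed (use W in auto)
  then have "W \<in> unitary_mats m" using W by (rule unitary_matsI[rotated])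
  moreover have "C * W = W * kron pauli_z (1\<^sub>m n)"
    unfolding W_def using E(3) CF by (simp add: mult_hcat[OF C(1) E(1) F] hcat_mult_kron_pauli_z[OF E(1) F])
  moreover have "D * W = W * kron pauli_x (1\<^sub>m n)"
    unfolding W_def using DF by (simp add: mult_hcat[OF D(1) E(1) F] hcat_mult_kron_pauli_x[OF E(1) F] F_def[symmetric])
  ultimately show ?thesis using mn that by blast
qed

lemma kron_one_form_imp_real_linear_unitary:
  assumes U: "U \<in> unitary_mats (2 * n)" and V: "V \<in> unitary_mats (2 * n)"
    and \<phi>: "\<forall>A\<in>H20. \<phi> A = U * kron A (1\<^sub>m n) * V"
  shows "real_linear_on_H20 \<phi> \<and> \<phi> ` IH20 \<subseteq> unitary_mats (2 * n)"
proof -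
  note U' = unitary_matsD(1)[OF U] and V' = unitary_matsD(1)[OF V]
  have K: "kron A (1\<^sub>m n) \<in> carrier_mat (2 * n) (2 * n)" if "A \<in> H20" for A
    using that by (auto simp: H20_def)
  have "\<phi> (A + B) = \<phi> A + \<phi> B" if A: "A \<in> H20" and B: "B \<in> H20" for A B
  proof -
    have "\<phi> (A + B) = U * (kron A (1\<^sub>m n) + kron B (1\<^sub>m n)) * V"
      using \<phi> H20_add[OF A B] A B by (simp add: kron_add_left[of _ 2 2] H20_def)
    also have "\<dots> = U * kron A (1\<^sub>m n) * V + U * kron B (1\<^sub>m n) * V"
      unfolding mult_add_distrib_mat[OF U' K[OF A] K[OF B]]
      using mult_carrier_mat[OF U' K[OF A]] mult_carrier_mat[OF U' K[OF B]] V' by (rule add_mult_distrib_mat)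
    finally show ?thesis using \<phi> A B by simp
  qed
  moreover have "\<phi> (complex_of_real r \<cdot>\<^sub>m A) = complex_of_real r \<cdot>\<^sub>m \<phi> A" if A: "A \<in> H20" for A r
    using \<phi> H20_smult[OF A] A K[OF A] U' V'
    by (simp add: kron_smult_left mult_smult_distrib[OF U'] mult_smult_assoc_mat[OF mult_carrier_mat[OF U' K[OF A]] V'])
  moreover have "\<phi> A \<in> unitary_mats (2 * n)" if A: "A \<in> IH20" for A
    using A \<phi> U V kron_unitary_mats[OF _ unitary_mats_one, of A 2 n] unitary_mats_mult
    by (auto simp: IH20_def)
  ultimately show ?thesis unfolding real_linear_on_H20_def by blast
qed

lemma adjoint_lincomb_mult_lincomb:
  assumes "X \<in> carrier_mat n m" "Y \<in> carrier_mat n m"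
  shows "adjoint_mat (of_real a \<cdot>\<^sub>m X + of_real b \<cdot>\<^sub>m Y) * (of_real a \<cdot>\<^sub>m X + of_real b \<cdot>\<^sub>m Y)
    = of_real (a\<^sup>2) \<cdot>\<^sub>m (adjoint_mat X * X) + of_real (a * b) \<cdot>\<^sub>m (adjoint_mat X * Y + adjoint_mat Y * X)
      + of_real (b\<^sup>2) \<cdot>\<^sub>m (adjoint_mat Y * Y)"
  using assms by (intro eq_matI) (auto simp: sum.distrib sum_distrib_left algebra_simps power2_eq_square)

lemma adjoint_lincomb:
  "X \<in> carrier_mat n m \<Longrightarrow> Y \<in> carrier_mat n m \<Longrightarrow>
   adjoint_mat (of_real a \<cdot>\<^sub>m X + of_real b \<cdot>\<^sub>m Y) = of_real a \<cdot>\<^sub>m adjoint_mat X + of_real b \<cdot>\<^sub>m adjoint_mat Y"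
  by (intro eq_matI) auto

lemma unitary_lincomb_anticommute:
  assumes X: "X \<in> unitary_mats m" and Y: "Y \<in> unitary_mats m"
    and ab: "a\<^sup>2 + b\<^sup>2 = 1" "a * b \<noteq> 0"
    and XY: "of_real a \<cdot>\<^sub>m X + of_real b \<cdot>\<^sub>m Y \<in> unitary_mats m"
  shows "adjoint_mat Y * X = - (adjoint_mat X * Y)"
proof -
  note X' = unitary_matsD[OF X] and Y' = unitary_matsD[OF Y]
  define S where "S = adjoint_mat X * Y + adjoint_mat Y * X"
  have S: "S \<in> carrier_mat m m" unfolding S_def using X'(1) Y'(1) by auto
  have a2: "(complex_of_real a)\<^sup>2 = 1 - (complex_of_real b)\<^sup>2"
    using arg_cong[OF ab(1), of complex_of_real] by (simp add: eq_diff_eq)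
  have expand: "1\<^sub>m m = of_real (a\<^sup>2) \<cdot>\<^sub>m 1\<^sub>m m + of_real (a * b) \<cdot>\<^sub>m S + of_real (b\<^sup>2) \<cdot>\<^sub>m 1\<^sub>m m"
    using unitary_matsD(2)[OF XY] adjoint_lincomb_mult_lincomb[OF X'(1) Y'(1), of a b] X'(2) Y'(2)
    unfolding S_def by simp
  show ?thesis
  proof (rule eq_matI)
    fix i j assume "i < dim_row (- (adjoint_mat X * Y))" "j < dim_col (- (adjoint_mat X * Y))"
    then have ij: "i < m" "j < m" using X'(1) Y'(1) by auto
    have "1\<^sub>m m $$ (i,j) = (of_real (a\<^sup>2) \<cdot>\<^sub>m 1\<^sub>m m + of_real (a * b) \<cdot>\<^sub>m S + of_real (b\<^sup>2) \<cdot>\<^sub>m 1\<^sub>m m) $$ (i,j)"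
      using expand by simp
    then have "of_real (a * b) * S $$ (i,j) = 0"
      using ij S by (simp add: a2 algebra_simps)
    then have "S $$ (i,j) = 0" using ab(2) by simp
    then show "(adjoint_mat Y * X) $$ (i,j) = (- (adjoint_mat X * Y)) $$ (i,j)"
      using ij X'(1) Y'(1) unfolding S_def by (simp add: eq_neg_iff_add_eq_0 add.commute
        del: index_mult_mat_lessThan)
  qed (use X'(1) Y'(1) in auto)
qed

lemma anticommuting_unitaries_hermitian_involution:
  assumes X: "X \<in> unitary_mats m" and Y: "Y \<in> unitary_mats m"
    and anti: "adjoint_mat Y * X = - (adjoint_mat X * Y)" "Y * adjoint_mat X = - (X * adjoint_mat Y)"
    and c: "cnj c = - c" "c * c = - 1"
  shows "adjoint_mat (c \<cdot>\<^sub>m (X * adjoint_mat Y)) = c \<cdot>\<^sub>m (X * adjoint_mat Y)"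
    "c \<cdot>\<^sub>m (X * adjoint_mat Y) * (c \<cdot>\<^sub>m (X * adjoint_mat Y)) = 1\<^sub>m m"
proof -
  note X' = unitary_matsD[OF X] and Y' = unitary_matsD[OF Y]
  \<comment> \<open>Instantiated at size m, these rules have side conditions that simp can discharge.\<close>
  note sq = assoc_mult_mat[of _ m m _ m _ m] mult_carrier_mat[of _ m m _ m]
    mult_smult_assoc_mat[of _ m m _ m] mult_smult_distrib[of _ m m _ m]
  have aX: "adjoint_mat X \<in> carrier_mat m m" and aY: "adjoint_mat Y \<in> carrier_mat m m"
    using X' Y' by auto
  show "adjoint_mat (c \<cdot>\<^sub>m (X * adjoint_mat Y)) = c \<cdot>\<^sub>m (X * adjoint_mat Y)"
    using X'(1) aY anti(2) c(1) by (simp add: adjoint_mat_smult adjoint_mat_mult) (intro eq_matI, auto)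
  have "X * adjoint_mat Y * (X * adjoint_mat Y) = X * (adjoint_mat Y * X) * adjoint_mat Y"
    using X'(1) aY by (simp add: sq)
  also have "\<dots> = - (X * adjoint_mat X * (Y * adjoint_mat Y))"
    using X'(1) aX Y'(1) aY anti(1) by (simp add: sq)
  finally show "c \<cdot>\<^sub>m (X * adjoint_mat Y) * (c \<cdot>\<^sub>m (X * adjoint_mat Y)) = 1\<^sub>m m"
    using X' Y' aY c(2) by (simp add: sq) (intro eq_matI, auto)
qed

lemma anticommuting_unitaries_products_anticommute:
  assumes X: "X \<in> unitary_mats m" and Y: "Y \<in> unitary_mats m" and Z: "Z \<in> unitary_mats m"
    and anti: "adjoint_mat Y * X = - (adjoint_mat X * Y)" "adjoint_mat Y * Z = - (adjoint_mat Z * Y)"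
      "Z * adjoint_mat X = - (X * adjoint_mat Z)"
  shows "X * adjoint_mat Y * (Z * adjoint_mat Y) = - (Z * adjoint_mat Y * (X * adjoint_mat Y))"
proof -
  note X' = unitary_matsD[OF X] and Y' = unitary_matsD[OF Y] and Z' = unitary_matsD[OF Z]
  note sq = assoc_mult_mat[of _ m m _ m _ m] mult_carrier_mat[of _ m m _ m]
  have aX: "adjoint_mat X \<in> carrier_mat m m" and aY: "adjoint_mat Y \<in> carrier_mat m m"
    and aZ: "adjoint_mat Z \<in> carrier_mat m m" using X' Y' Z' by auto
  have "X * adjoint_mat Y * (Z * adjoint_mat Y) = X * (adjoint_mat Y * Z) * adjoint_mat Y"
    using X'(1) aY Z'(1) by (simp add: sq)
  also have "\<dots> = - (X * adjoint_mat Z * (Y * adjoint_mat Y))"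
    using X'(1) aY Z'(1) aZ Y'(1) anti(2) by (simp add: sq)
  also have "\<dots> = Z * adjoint_mat X"
    using anti(3) X'(1) Z'(1) Y'(3) by simp
  also have "\<dots> = - (Z * (adjoint_mat Y * X) * adjoint_mat Y)"
    using X'(1) aY Z'(1) aX Y' anti(1) by (simp add: sq)
  also have "\<dots> = - (Z * adjoint_mat Y * (X * adjoint_mat Y))"
    using X'(1) aY Z'(1) by (simp add: sq)
  finally show ?thesis .
qed

lemma pauli_lincomb_in_IH20:
  "of_real (3/5) \<cdot>\<^sub>m pauli_x + of_real (4/5) \<cdot>\<^sub>m pauli_y \<in> IH20"
  "of_real (3/5) \<cdot>\<^sub>m pauli_z + of_real (4/5) \<cdot>\<^sub>m pauli_y \<in> IH20"
  "of_real (3/5) \<cdot>\<^sub>m pauli_x + of_real (4/5) \<cdot>\<^sub>m pauli_z \<in> IH20"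
proof -
  have "of_real (3/5) \<cdot>\<^sub>m pauli_x + of_real (4/5) \<cdot>\<^sub>m pauli_y = pauli_comb (3/5) (4/5) 0"
    "of_real (3/5) \<cdot>\<^sub>m pauli_z + of_real (4/5) \<cdot>\<^sub>m pauli_y = pauli_comb 0 (4/5) (3/5)"
    "of_real (3/5) \<cdot>\<^sub>m pauli_x + of_real (4/5) \<cdot>\<^sub>m pauli_z = pauli_comb (3/5) 0 (4/5)"
    by (auto intro!: mat2_eqI simp: index_pauli_comb pauli_x_def pauli_y_def pauli_z_def)
  then show "of_real (3/5) \<cdot>\<^sub>m pauli_x + of_real (4/5) \<cdot>\<^sub>m pauli_y \<in> IH20"
    "of_real (3/5) \<cdot>\<^sub>m pauli_z + of_real (4/5) \<cdot>\<^sub>m pauli_y \<in> IH20"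
    "of_real (3/5) \<cdot>\<^sub>m pauli_x + of_real (4/5) \<cdot>\<^sub>m pauli_z \<in> IH20"
    by (auto intro!: pauli_comb_in_IH20 simp: power2_eq_square)
qed

lemma real_linear_unitary_images_anticommute:
  assumes lin: "real_linear_on_H20 \<phi>" and uni: "\<phi> ` IH20 \<subseteq> unitary_mats m"
    and P: "P \<in> IH20" and Q: "Q \<in> IH20" and ab: "a\<^sup>2 + b\<^sup>2 = 1" "a * b \<noteq> 0"
    and PQ: "of_real a \<cdot>\<^sub>m P + of_real b \<cdot>\<^sub>m Q \<in> IH20"
  shows "adjoint_mat (\<phi> Q) * \<phi> P = - (adjoint_mat (\<phi> P) * \<phi> Q)"
    "\<phi> Q * adjoint_mat (\<phi> P) = - (\<phi> P * adjoint_mat (\<phi> Q))"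
proof -
  have uP: "\<phi> P \<in> unitary_mats m" and uQ: "\<phi> Q \<in> unitary_mats m" using uni P Q by auto
  have "\<phi> (of_real a \<cdot>\<^sub>m P + of_real b \<cdot>\<^sub>m Q) = of_real a \<cdot>\<^sub>m \<phi> P + of_real b \<cdot>\<^sub>m \<phi> Q"
  proof -
    have "P \<in> H20" "Q \<in> H20" using P Q IH20_subset_H20 by auto
    then show ?thesis using lin H20_smult unfolding real_linear_on_H20_def by simp
  qed
  then have uPQ: "of_real a \<cdot>\<^sub>m \<phi> P + of_real b \<cdot>\<^sub>m \<phi> Q \<in> unitary_mats m"
    using uni PQ by (metis image_subset_iff)
  show "adjoint_mat (\<phi> Q) * \<phi> P = - (adjoint_mat (\<phi> P) * \<phi> Q)"
    using unitary_lincomb_anticommute[OF uP uQ ab uPQ] .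
  have "of_real a \<cdot>\<^sub>m adjoint_mat (\<phi> P) + of_real b \<cdot>\<^sub>m adjoint_mat (\<phi> Q) \<in> unitary_mats m"
    using unitary_mats_adjoint[OF uPQ] unitary_matsD(1)[OF uP] unitary_matsD(1)[OF uQ]
    by (simp add: adjoint_lincomb)
  from unitary_lincomb_anticommute[OF unitary_mats_adjoint[OF uP] unitary_mats_adjoint[OF uQ] ab this]
  show "\<phi> Q * adjoint_mat (\<phi> P) = - (\<phi> P * adjoint_mat (\<phi> Q))" by simp
qed

lemma unitary_intertwiner_conj:
  assumes W: "W \<in> unitary_mats m" and M: "M \<in> carrier_mat m m" and K: "K \<in> carrier_mat m m"
    and MW: "M * W = W * K"
  shows "W * K * adjoint_mat W = M"
proof -
  note W' = unitary_matsD[OF W]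
  have "W * K * adjoint_mat W = M * W * adjoint_mat W" using MW by simp
  also have "\<dots> = M" using assoc_mult_mat[OF M W'(1) adjoint_mat_carrier[OF W'(1)]] W'(3) M by simp
  finally show ?thesis .
qed

lemma kron_one_form_at_paulis:
  assumes X: "X \<in> carrier_mat m m" and Y: "Y \<in> unitary_mats m" and Z: "Z \<in> carrier_mat m m"
    and W: "W \<in> unitary_mats m" and mn: "m = 2 * n"
    and CW: "(- \<i> \<cdot>\<^sub>m (X * adjoint_mat Y)) * W = W * kron pauli_z (1\<^sub>m n)"
    and DW: "(\<i> \<cdot>\<^sub>m (Z * adjoint_mat Y)) * W = W * kron pauli_x (1\<^sub>m n)"
  defines "V \<equiv> kron pauli_y (1\<^sub>m n) * adjoint_mat W * Y"
  shows "W * kron pauli_x (1\<^sub>m n) * V = X" and "W * kron pauli_y (1\<^sub>m n) * V = Y"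
    and "W * kron pauli_z (1\<^sub>m n) * V = Z"
proof -
  note Y' = unitary_matsD[OF Y] and W' = unitary_matsD[OF W]
  note sq = assoc_mult_mat[of _ m m _ m _ m] mult_carrier_mat[of _ m m _ m]
    mult_smult_assoc_mat[of _ m m _ m] mult_smult_distrib[of _ m m _ m]
  have aW: "adjoint_mat W \<in> carrier_mat m m" using W'(1) by auto
  have K: "kron A (1\<^sub>m n) \<in> carrier_mat m m" if "A \<in> carrier_mat 2 2" for A
    using that mn by auto
  have form: "W * kron A (1\<^sub>m n) * V = W * kron (A * pauli_y) (1\<^sub>m n) * adjoint_mat W * Y"
    if A: "A \<in> carrier_mat 2 2" for A
  proof -
    have "kron A (1\<^sub>m n) * kron pauli_y (1\<^sub>m n) = kron (A * pauli_y) (1\<^sub>m n)"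
      using kron_mult[OF A one_carrier_mat pauli_carrier(2) one_carrier_mat] by simp
    then show ?thesis
      unfolding V_def
      using assoc_mult_mat_eq[OF K[OF A] K[OF pauli_carrier(2)] mult_carrier_mat[OF aW Y'(1)]]
        W'(1) aW Y'(1) K[OF A] K[OF pauli_carrier(2)] K[OF mult_carrier_mat[OF A pauli_carrier(2)]]
      by (simp add: sq)
  qed
  have conj_z: "W * kron pauli_z (1\<^sub>m n) * adjoint_mat W = - \<i> \<cdot>\<^sub>m (X * adjoint_mat Y)"
    using unitary_intertwiner_conj[OF W _ K[OF pauli_carrier(3)] CW] X Y'(1) by auto
  have conj_x: "W * kron pauli_x (1\<^sub>m n) * adjoint_mat W = \<i> \<cdot>\<^sub>m (Z * adjoint_mat Y)"
    using unitary_intertwiner_conj[OF W _ K[OF pauli_carrier(1)] DW] Z Y'(1) by auto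
  have "W * kron pauli_x (1\<^sub>m n) * V = \<i> \<cdot>\<^sub>m (W * kron pauli_z (1\<^sub>m n) * adjoint_mat W * Y)"
    using form[OF pauli_carrier(1)] W'(1) aW Y'(1) K[OF pauli_carrier(3)]
    by (simp add: pauli_mult kron_smult_left sq)
  also have "\<dots> = X"
    unfolding conj_z using X Y' by (simp add: sq) (intro eq_matI, auto)
  finally show "W * kron pauli_x (1\<^sub>m n) * V = X" .
  have "W * kron pauli_y (1\<^sub>m n) * V = W * adjoint_mat W * Y"
    using form[OF pauli_carrier(2)] W'(1) by (simp add: pauli_mult kron_one mn)
  then show "W * kron pauli_y (1\<^sub>m n) * V = Y" using W'(3) Y'(1) by simp
  have "W * kron pauli_z (1\<^sub>m n) * V = - \<i> \<cdot>\<^sub>m (W * kron pauli_x (1\<^sub>m n) * adjoint_mat W * Y)"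
    using form[OF pauli_carrier(3)] W'(1) aW Y'(1) K[OF pauli_carrier(1)]
    by (simp add: pauli_mult kron_smult_left sq)
  also have "\<dots> = Z"
    unfolding conj_x using Z Y' by (simp add: sq) (intro eq_matI, auto)
  finally show "W * kron pauli_z (1\<^sub>m n) * V = Z" .
qed

lemma real_linear_unitary_imp_kron_one_form:
  assumes lin: "real_linear_on_H20 \<phi>" and uni: "\<phi> ` IH20 \<subseteq> unitary_mats m"
  shows "\<exists>U V n. U \<in> unitary_mats m \<and> V \<in> unitary_mats m \<and> m = 2 * n \<and>
    (\<forall>A\<in>H20. \<phi> A = U * kron A (1\<^sub>m n) * V)"
proof -
  define X Y Z where "X = \<phi> pauli_x" and "Y = \<phi> pauli_y" and "Z = \<phi> pauli_z"
  have uX: "X \<in> unitary_mats m" and uY: "Y \<in> unitary_mats m" and uZ: "Z \<in> unitary_mats m"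
    unfolding X_def Y_def Z_def using uni pauli_in_IH20 by auto
  note X' = unitary_matsD[OF uX] and Y' = unitary_matsD[OF uY] and Z' = unitary_matsD[OF uZ]
  have ab: "(3/5 :: real)\<^sup>2 + (4/5)\<^sup>2 = 1" "(3/5 :: real) * (4/5) \<noteq> 0"
    by (simp_all add: power2_eq_square)
  note anti_xy = real_linear_unitary_images_anticommute[OF lin uni pauli_in_IH20(1,2) ab pauli_lincomb_in_IH20(1),
      folded X_def Y_def]
  note anti_zy = real_linear_unitary_images_anticommute[OF lin uni pauli_in_IH20(3,2) ab pauli_lincomb_in_IH20(2),
      folded Z_def Y_def]
  note anti_xz = real_linear_unitary_images_anticommute[OF lin uni pauli_in_IH20(1,3) ab pauli_lincomb_in_IH20(3),
      folded X_def Z_def]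
  define C D where "C = - \<i> \<cdot>\<^sub>m (X * adjoint_mat Y)" and "D = \<i> \<cdot>\<^sub>m (Z * adjoint_mat Y)"
  have C: "C \<in> carrier_mat m m" "adjoint_mat C = C" "C * C = 1\<^sub>m m"
    using anticommuting_unitaries_hermitian_involution[OF uX uY anti_xy, of "- \<i>"] X'(1) Y'(1)
    unfolding C_def by auto
  have D: "D \<in> carrier_mat m m" "adjoint_mat D = D" "D * D = 1\<^sub>m m"
    using anticommuting_unitaries_hermitian_involution[OF uZ uY anti_zy, of \<i>] Z'(1) Y'(1)
    unfolding D_def by auto
  have "C * D = - (D * C)"
    using anticommuting_unitaries_products_anticommute[OF uX uY uZ anti_xy(1) anti_zy(1) anti_xz(2)] X'(1) Y'(1) Z'(1)
    unfolding C_def D_def by (simp add: assoc_mult_mat[of _ m m _ m _ m] mult_carrier_mat[of _ m m _ m]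
      mult_smult_assoc_mat[of _ m m _ m] mult_smult_distrib[of _ m m _ m]) (intro eq_matI, auto)
  then obtain n W where mn: "m = 2 * n" and uW: "W \<in> unitary_mats m"
    and CW: "C * W = W * kron pauli_z (1\<^sub>m n)" and DW: "D * W = W * kron pauli_x (1\<^sub>m n)"
    using anticommuting_hermitian_involutions_pauli_form[OF C D] by blast
  \<comment> \<open>V is forced by evaluating at the involution pauli_y.\<close>
  define V where "V = kron pauli_y (1\<^sub>m n) * adjoint_mat W * Y"
  note at_paulis = kron_one_form_at_paulis[OF X'(1) uY Z'(1) uW mn CW[unfolded C_def] DW[unfolded D_def],
      folded V_def]
  have "pauli_y \<in> unitary_mats 2" using pauli_in_IH20(2) by (simp add: IH20_def)
  then have uV: "V \<in> unitary_mats m"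
    unfolding V_def mn
    using kron_unitary_mats[OF _ unitary_mats_one] unitary_mats_mult unitary_mats_adjoint uW uY mn by metis
  have "real_linear_on_H20 (\<lambda>A. W * kron A (1\<^sub>m n) * V)"
    using kron_one_form_imp_real_linear_unitary[of W n V] uW uV mn by auto
  then have "\<forall>A\<in>H20. \<phi> A = W * kron A (1\<^sub>m n) * V"
    using real_linear_on_H20_eqI[OF lin] at_paulis unfolding X_def Y_def Z_def by metis
  with uW uV mn show ?thesis by blast
qed

theorem proposition3p4:
  fixes m :: nat and \<phi> :: "complex mat \<Rightarrow> complex mat"
  assumes "\<forall>A\<in>H20. \<phi> A \<in> carrier_mat m m"
  shows "(real_linear_on_H20 \<phi> \<and> \<phi> ` IH20 \<subseteq> unitary_mats m) \<longleftrightarrow>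
         (\<exists>U V n. U \<in> unitary_mats m \<and> V \<in> unitary_mats m \<and> m = 2 * n \<and>
             (\<forall>A\<in>H20. \<phi> A = U * kron A (1\<^sub>m n) * V))"
  using real_linear_unitary_imp_kron_one_form kron_one_form_imp_real_linear_unitary by blast

end
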